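(* Let $\mathfrak g$ be a simple Lie superalgebra with an invariant supersymmetric bilinear form $(\cdot|\cdot)$, let $x\in\mathfrak g$, and let $\phi$ be a conjugate-linear involution of $\mathfrak g$ such that $(x|x)$ is a non-zero real number and $\phi(x)=x$. Then $\overline{(\phi(a)|\phi(b))}=(a|b)$ for all $a,b\in\mathfrak g$.
   Context: A conjugate-linear involution of a Lie superalgebra is a conjugate-linear, parity-preserving bijection $\phi$ with $\phi([a,b])=[\phi(a),\phi(b)]$ and $\phi^2=\mathrm{id}$. *)

theory Defs
  imports Complex_Main
begin

text \<open>Parities are booleans: False = even, True = odd.\<close>

definition gpart :: "'g set \<Rightarrow> 'g set \<Rightarrow> bool \<Rightarrow> 'g set" where
  "gpart G0 G1 p = (if p then G1 else G0)"

definition psign :: "bool \<Rightarrow> bool \<Rightarrow> complex" where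
  "psign p q = (if p \<and> q then -1 else 1)"

definition lie_superalgebra ::
  "(complex \<Rightarrow> 'g::ab_group_add \<Rightarrow> 'g) \<Rightarrow> 'g set \<Rightarrow> 'g set \<Rightarrow> ('g \<Rightarrow> 'g \<Rightarrow> 'g) \<Rightarrow> bool" where
  "lie_superalgebra sc G0 G1 br \<longleftrightarrow>
     vector_space sc \<and>
     module.subspace sc G0 \<and> module.subspace sc G1 \<and> G0 \<inter> G1 = {0} \<and>
     (\<forall>a. \<exists>u\<in>G0. \<exists>v\<in>G1. a = u + v) \<and>
     (\<forall>a b c. br (a + b) c = br a c + br b c) \<and>
     (\<forall>a b c. br a (b + c) = br a b + br a c) \<and>
     (\<forall>k a b. br (sc k a) b = sc k (br a b)) \<and>
     (\<forall>k a b. br a (sc k b) = sc k (br a b)) \<and>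
     (\<forall>p q a b. a \<in> gpart G0 G1 p \<longrightarrow> b \<in> gpart G0 G1 q \<longrightarrow>
        br a b \<in> gpart G0 G1 (p \<noteq> q)) \<and>
     (\<forall>p q a b. a \<in> gpart G0 G1 p \<longrightarrow> b \<in> gpart G0 G1 q \<longrightarrow>
        br a b = - sc (psign p q) (br b a)) \<and>
     (\<forall>p q a b c. a \<in> gpart G0 G1 p \<longrightarrow> b \<in> gpart G0 G1 q \<longrightarrow>
        br a (br b c) = br (br a b) c + sc (psign p q) (br b (br a c)))"

definition graded_ideal ::
  "(complex \<Rightarrow> 'g::ab_group_add \<Rightarrow> 'g) \<Rightarrow> 'g set \<Rightarrow> 'g set \<Rightarrow> ('g \<Rightarrow> 'g \<Rightarrow> 'g) \<Rightarrow> 'g set \<Rightarrow> bool" where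
  "graded_ideal sc G0 G1 br I \<longleftrightarrow>
     module.subspace sc I \<and>
     (\<forall>a\<in>I. \<exists>u\<in>I \<inter> G0. \<exists>v\<in>I \<inter> G1. a = u + v) \<and>
     (\<forall>a b. b \<in> I \<longrightarrow> br a b \<in> I)"

definition simple_lie_superalgebra ::
  "(complex \<Rightarrow> 'g::ab_group_add \<Rightarrow> 'g) \<Rightarrow> 'g set \<Rightarrow> 'g set \<Rightarrow> ('g \<Rightarrow> 'g \<Rightarrow> 'g) \<Rightarrow> bool" where
  "simple_lie_superalgebra sc G0 G1 br \<longleftrightarrow>
     lie_superalgebra sc G0 G1 br \<and>
     (\<exists>a b. br a b \<noteq> 0) \<and>
     (\<forall>I. graded_ideal sc G0 G1 br I \<longrightarrow> I = {0} \<or> I = UNIV)"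

definition invariant_supersymmetric_form ::
  "(complex \<Rightarrow> 'g::ab_group_add \<Rightarrow> 'g) \<Rightarrow> 'g set \<Rightarrow> 'g set \<Rightarrow> ('g \<Rightarrow> 'g \<Rightarrow> 'g)
    \<Rightarrow> ('g \<Rightarrow> 'g \<Rightarrow> complex) \<Rightarrow> bool" where
  "invariant_supersymmetric_form sc G0 G1 br B \<longleftrightarrow>
     (\<forall>a b c. B (a + b) c = B a c + B b c) \<and>
     (\<forall>a b c. B a (b + c) = B a b + B a c) \<and>
     (\<forall>k a b. B (sc k a) b = k * B a b) \<and>
     (\<forall>k a b. B a (sc k b) = k * B a b) \<and>
     (\<forall>a b. a \<in> G0 \<longrightarrow> b \<in> G1 \<longrightarrow> B a b = 0) \<and>
     (\<forall>p q a b. a \<in> gpart G0 G1 p \<longrightarrow> b \<in> gpart G0 G1 q \<longrightarrow>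
        B a b = psign p q * B b a) \<and>
     (\<forall>a b c. B (br a b) c = B a (br b c))"

definition conj_linear_involution ::
  "(complex \<Rightarrow> 'g::ab_group_add \<Rightarrow> 'g) \<Rightarrow> 'g set \<Rightarrow> 'g set \<Rightarrow> ('g \<Rightarrow> 'g \<Rightarrow> 'g) \<Rightarrow> ('g \<Rightarrow> 'g) \<Rightarrow> bool" where
  "conj_linear_involution sc G0 G1 br \<phi> \<longleftrightarrow>
     (\<forall>a b. \<phi> (a + b) = \<phi> a + \<phi> b) \<and>
     (\<forall>k a. \<phi> (sc k a) = sc (cnj k) (\<phi> a)) \<and>
     \<phi> ` G0 \<subseteq> G0 \<and> \<phi> ` G1 \<subseteq> G1 \<and>
     bij \<phi> \<and>
     (\<forall>a b. \<phi> (br a b) = br (\<phi> a) (\<phi> b)) \<and>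
     (\<forall>a. \<phi> (\<phi> a) = a)"

end

theory Submission
  imports Defs "Jordan_Normal_Form.Spectral_Radius"
begin

(* The form B'(a, b) = cnj (B (\<phi> a) (\<phi> b)) is again invariant and supersymmetric. The radical
   of an invariant form is a graded ideal, so on a simple algebra an invariant form is either zero
   or nondegenerate; in particular B is nondegenerate. In finite dimension over the complex numbers
   some member B' - e B of the pencil is degenerate (e is an eigenvalue of the matrix
   Gram(B)^-1 Gram(B')), hence vanishes, so B' = e B, and evaluating at x gives e = 1. *)

definition bilinear_form :: "('a \<Rightarrow> 'g::ab_group_add \<Rightarrow> 'g) \<Rightarrow> ('g \<Rightarrow> 'g \<Rightarrow> 'a::comm_ring_1) \<Rightarrow> bool"
  where "bilinear_form sc C \<longleftrightarrow>
     (\<forall>a b c. C (a + b) c = C a c + C b c) \<and>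
     (\<forall>a b c. C a (b + c) = C a b + C a c) \<and>
     (\<forall>k a b. C (sc k a) b = k * C a b) \<and>
     (\<forall>k a b. C a (sc k b) = k * C a b)"

definition form_radical :: "('g \<Rightarrow> 'g \<Rightarrow> 'a::zero) \<Rightarrow> 'g set"
  where "form_radical C = {a. \<forall>b. C b a = 0}"

definition gram_matrix :: "('g \<Rightarrow> 'g \<Rightarrow> 'a) \<Rightarrow> 'g list \<Rightarrow> 'a mat"
  where "gram_matrix C bs = mat (length bs) (length bs) (\<lambda>(i, j). C (bs ! i) (bs ! j))"

definition basis_combination :: "('a \<Rightarrow> 'g \<Rightarrow> 'g) \<Rightarrow> 'g list \<Rightarrow> 'a vec \<Rightarrow> 'g::comm_monoid_add"
  where "basis_combination sc bs v = (\<Sum>j<length bs. sc (v $ j) (bs ! j))"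

lemma bilinear_formD:
  assumes "bilinear_form sc C"
  shows "C (a + b) c = C a c + C b c" and "C a (b + c) = C a b + C a c"
    and "C (sc k a) b = k * C a b" and "C a (sc k b) = k * C a b"
  using assms unfolding bilinear_form_def by blast+

lemma bilinear_form_zero:
  assumes "bilinear_form sc C"
  shows "C 0 a = 0" and "C a 0 = 0"
  using bilinear_formD(1)[OF assms, of 0 0 a] bilinear_formD(2)[OF assms, of a 0 0] by simp_all

lemma bilinear_form_diff_scaled:
  assumes "bilinear_form sc C" and "bilinear_form sc D"
  shows "bilinear_form sc (\<lambda>a b. C a b - e * D a b)"
  using assms unfolding bilinear_form_def by (simp add: algebra_simps)

lemma gram_matrix_mult_vec:
  assumes C: "bilinear_form sc C" and "v \<in> carrier_vec (length bs)" and "i < length bs"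
  shows "(gram_matrix C bs *\<^sub>v v) $ i = C (bs ! i) (basis_combination sc bs v)"
proof -
  have "C (bs ! i) (basis_combination sc bs v) = (\<Sum>j<length bs. C (bs ! i) (sc (v $ j) (bs ! j)))"
    unfolding basis_combination_def
    using sum_comp_morphism[of "C (bs ! i)" "\<lambda>j. sc (v $ j) (bs ! j)" "{..<length bs}"]
    by (simp add: o_def bilinear_form_zero[OF C] bilinear_formD(2)[OF C])
  then show ?thesis
    using assms by (simp add: gram_matrix_def scalar_prod_def bilinear_formD(4)[OF C] mult.commute
        lessThan_atLeast0)
qed

context Modules.module
begin

lemma bilinear_form_eq_0_on_span:
  fixes S :: "'b set"
  assumes C: "bilinear_form scale C" and "b \<in> span S" and "\<forall>u\<in>S. C u a = 0"
  shows "C b a = 0"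
  using \<open>b \<in> span S\<close>
proof (induction rule: span_induct_alt)
  case base
  show ?case by (rule bilinear_form_zero(1)[OF C])
next
  case (step c u y)
  then show ?case using assms(3) by (simp add: bilinear_formD[OF C])
qed

lemma basis_combination_eq_0_imp:
  assumes "independent (set bs)" and "distinct bs"
    and v: "v \<in> carrier_vec (length bs)" and "basis_combination scale bs v = 0"
  shows "v = 0\<^sub>v (length bs)"
proof -
  let ?n = "length bs"
  have inj: "inj_on ((!) bs) {..<?n}"
    using \<open>distinct bs\<close> by (simp add: inj_on_nth)
  have img: "(!) bs ` {..<?n} = set bs"
    by (auto simp: in_set_conv_nth)
  define u where "u w = v $ (inv_into {..<?n} ((!) bs) w)" for w
  have "(\<Sum>w\<in>set bs. scale (u w) w) = (\<Sum>j<?n. scale (u (bs ! j)) (bs ! j))"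
    unfolding img[symmetric] by (rule sum.reindex[OF inj, unfolded o_def])
  also have "\<dots> = 0"
    using \<open>basis_combination scale bs v = 0\<close>
    by (simp add: u_def basis_combination_def inv_into_f_f[OF inj])
  finally have "\<forall>w\<in>set bs. u w = 0"
    using independentD[OF \<open>independent (set bs)\<close>] by blast
  then have "\<forall>j<?n. v $ j = 0"
    unfolding u_def by (metis inv_into_f_f[OF inj] lessThan_iff nth_mem)
  then show ?thesis using v by (intro eq_vecI) auto
qed

end

context finite_dimensional_vector_space
begin

lemma gram_matrix_kernel_radical:
  assumes "distinct bs" and "set bs = Basis" and C: "bilinear_form scale C"
    and v: "v \<in> carrier_vec (length bs)" "v \<noteq> 0\<^sub>v (length bs)"
    and Cv: "gram_matrix C bs *\<^sub>v v = 0\<^sub>v (length bs)"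
  shows "basis_combination scale bs v \<in> form_radical C - {0}"
proof -
  let ?w = "basis_combination scale bs v"
  have "C (bs ! i) ?w = 0" if "i < length bs" for i
    using Cv gram_matrix_mult_vec[OF C v(1) that] that by (metis index_zero_vec(1))
  then have "C b ?w = 0" for b
    using span_Basis assms(2) by (intro bilinear_form_eq_0_on_span[OF C]) (auto simp: in_set_conv_nth)
  moreover have "?w \<noteq> 0"
    using basis_combination_eq_0_imp assms(1,2) independent_Basis v by blast
  ultimately show ?thesis by (simp add: form_radical_def)
qed

end

lemma generalized_eigenvector_exists:
  fixes M N :: "complex mat"
  assumes M: "M \<in> carrier_mat n n" and N: "N \<in> carrier_mat n n" and "det M \<noteq> 0" and "n > 0"
  obtains e v where "v \<in> carrier_vec n" "v \<noteq> 0\<^sub>v n" "N *\<^sub>v v = e \<cdot>\<^sub>v (M *\<^sub>v v)"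
proof -
  obtain M' where M': "M' \<in> carrier_mat n n" and "M * M' = 1\<^sub>m n"
    using det_non_zero_imp_unit[OF M \<open>det M \<noteq> 0\<close>, of "()"] unfolding Units_def ring_mat_def by auto
  define A where "A = M' * N"
  have A: "A \<in> carrier_mat n n" using M' N by (simp add: A_def)
  obtain e where "eigenvalue A e"
    using spectrum_non_empty[OF A \<open>n > 0\<close>] unfolding spectrum_def by auto
  then obtain v where v: "v \<in> carrier_vec n" "v \<noteq> 0\<^sub>v n" and Av: "A *\<^sub>v v = e \<cdot>\<^sub>v v"
    unfolding eigenvalue_def eigenvector_def using A by auto
  have "N = M * A"
    using \<open>M * M' = 1\<^sub>m n\<close> M M' N by (simp add: A_def assoc_mult_mat[symmetric])
  then have "N *\<^sub>v v = e \<cdot>\<^sub>v (M *\<^sub>v v)"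
    using M A v Av by (simp add: mult_mat_vec)
  with v show thesis by (rule that)
qed

lemma bilinear_form_pencil_degenerate:
  fixes sc :: "complex \<Rightarrow> 'g::ab_group_add \<Rightarrow> 'g"
  assumes "finite_dimensional_vector_space sc Basis"
    and C: "bilinear_form sc C" and D: "bilinear_form sc D"
    and "form_radical D = {0}" and "(u::'g) \<noteq> 0"
  obtains e where "form_radical (\<lambda>a b. C a b - e * D a b) \<noteq> {0}"
proof -
  interpret finite_dimensional_vector_space sc Basis by fact
  obtain bs where bs: "distinct bs" "set bs = Basis"
    using finite_distinct_list[OF finite_Basis] by auto
  let ?n = "length bs"
  have M: "gram_matrix D bs \<in> carrier_mat ?n ?n" and N: "gram_matrix C bs \<in> carrier_mat ?n ?n"
    by (simp_all add: gram_matrix_def)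
  have "det (gram_matrix D bs) \<noteq> 0"
  proof
    assume "det (gram_matrix D bs) = 0"
    then obtain v where "v \<in> carrier_vec ?n" "v \<noteq> 0\<^sub>v ?n" "gram_matrix D bs *\<^sub>v v = 0\<^sub>v ?n"
      using det_0_iff_vec_prod_zero_field[OF M] by auto
    then show False
      using gram_matrix_kernel_radical[OF bs D] \<open>form_radical D = {0}\<close> by auto
  qed
  moreover have "?n > 0"
  proof (rule ccontr)
    assume "\<not> ?n > 0"
    then have "Basis = {}" using bs by auto
    then show False using span_Basis \<open>u \<noteq> 0\<close> by auto
  qed
  ultimately obtain e v where v: "v \<in> carrier_vec ?n" "v \<noteq> 0\<^sub>v ?n"
    and eig: "gram_matrix C bs *\<^sub>v v = e \<cdot>\<^sub>v (gram_matrix D bs *\<^sub>v v)"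
    using generalized_eigenvector_exists[OF M N] by blast
  let ?F = "\<lambda>a b. C a b - e * D a b"
  have F: "bilinear_form sc ?F" by (rule bilinear_form_diff_scaled[OF C D])
  have "gram_matrix ?F bs *\<^sub>v v = 0\<^sub>v ?n"
  proof (rule eq_vecI)
    fix i assume "i < dim_vec (0\<^sub>v ?n)"
    then have i: "i < ?n" by simp
    have "(gram_matrix C bs *\<^sub>v v) $ i = e * (gram_matrix D bs *\<^sub>v v) $ i"
      using arg_cong[OF eig, of "\<lambda>w. w $ i"] i M by (simp del: index_mult_mat_vec)
    then show "(gram_matrix ?F bs *\<^sub>v v) $ i = 0\<^sub>v ?n $ i"
      using i unfolding gram_matrix_mult_vec[OF F v(1) i] gram_matrix_mult_vec[OF C v(1) i]
        gram_matrix_mult_vec[OF D v(1) i] by simp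
  qed (simp add: gram_matrix_def)
  then show thesis
    using gram_matrix_kernel_radical[OF bs F v] that by blast
qed

lemma invariant_supersymmetric_formD:
  assumes "invariant_supersymmetric_form sc G0 G1 br C"
  shows "bilinear_form sc C"
    and "a \<in> G0 \<Longrightarrow> b \<in> G1 \<Longrightarrow> C a b = 0"
    and "a \<in> gpart G0 G1 p \<Longrightarrow> b \<in> gpart G0 G1 q \<Longrightarrow> C a b = psign p q * C b a"
    and "C (br a b) c = C a (br b c)"
  using assms unfolding invariant_supersymmetric_form_def bilinear_form_def by meson+

lemma invariant_supersymmetric_form_diff_scaled:
  assumes C: "invariant_supersymmetric_form sc G0 G1 br C"
    and D: "invariant_supersymmetric_form sc G0 G1 br D"
  shows "invariant_supersymmetric_form sc G0 G1 br (\<lambda>a b. C a b - e * D a b)"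
proof -
  have bil: "bilinear_form sc (\<lambda>a b. C a b - e * D a b)"
    by (rule bilinear_form_diff_scaled[OF invariant_supersymmetric_formD(1)[OF C]
          invariant_supersymmetric_formD(1)[OF D]])
  show ?thesis unfolding invariant_supersymmetric_form_def
  proof (intro conjI allI impI)
    fix p q a b assume ab: "a \<in> gpart G0 G1 p" "b \<in> gpart G0 G1 q"
    show "C a b - e * D a b = psign p q * (C b a - e * D b a)"
      unfolding invariant_supersymmetric_formD(3)[OF C ab] invariant_supersymmetric_formD(3)[OF D ab]
      by (simp add: algebra_simps)
  qed (use bilinear_formD[OF bil] in \<open>simp_all add: invariant_supersymmetric_formD(2,4)[OF C]
        invariant_supersymmetric_formD(2,4)[OF D]\<close>)
qed

lemma graded_ideal_form_radical:
  assumes L: "lie_superalgebra sc G0 G1 br"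
    and C: "invariant_supersymmetric_form sc G0 G1 br C"
  shows "graded_ideal sc G0 G1 br (form_radical C)"
proof -
  interpret vector_space sc using L unfolding lie_superalgebra_def by blast
  note bil = invariant_supersymmetric_formD(1)[OF C]
  note even_odd = invariant_supersymmetric_formD(2)[OF C]
  have odd_even: "C b a = 0" if "a \<in> G0" "b \<in> G1" for a b
    using invariant_supersymmetric_formD(3)[OF C, of a False b True] even_odd[OF that] that
    by (simp add: gpart_def psign_def)
  have decomp: "\<exists>u\<in>G0. \<exists>v\<in>G1. a = u + v" for a
    using L unfolding lie_superalgebra_def by meson
  show ?thesis unfolding graded_ideal_def
  proof (intro conjI ballI allI impI)
    show "subspace (form_radical C)"
      by (rule subspaceI) (auto simp: form_radical_def bilinear_form_zero[OF bil] bilinear_formD[OF bil])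
  next
    fix a assume a: "a \<in> form_radical C"
    obtain u v where u: "u \<in> G0" and v: "v \<in> G1" and auv: "a = u + v"
      using decomp by blast
    have "C b u = 0" for b
    proof -
      obtain b0 b1 where b0: "b0 \<in> G0" and b1: "b1 \<in> G1" and bb: "b = b0 + b1"
        using decomp by blast
      have "C b0 u = C b0 a" using auv even_odd[OF b0 v] by (simp add: bilinear_formD[OF bil])
      then show ?thesis
        using a bb odd_even[OF u b1] by (simp add: form_radical_def bilinear_formD[OF bil])
    qed
    then have "u \<in> form_radical C" by (simp add: form_radical_def)
    moreover have "v \<in> form_radical C"
      using a \<open>u \<in> form_radical C\<close> auv by (simp add: form_radical_def bilinear_formD[OF bil])
    ultimately show "\<exists>u\<in>form_radical C \<inter> G0. \<exists>v\<in>form_radical C \<inter> G1. a = u + v"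
      using u v auv by blast
  next
    fix a b assume "b \<in> form_radical C"
    then show "br a b \<in> form_radical C"
      by (simp add: form_radical_def invariant_supersymmetric_formD(4)[OF C, symmetric])
  qed
qed

lemma simple_invariant_form_eq_0:
  assumes "simple_lie_superalgebra sc G0 G1 br"
    and "invariant_supersymmetric_form sc G0 G1 br C"
    and "form_radical C \<noteq> {0}"
  shows "C a b = 0"
proof -
  have "form_radical C = UNIV"
    using assms graded_ideal_form_radical unfolding simple_lie_superalgebra_def by blast
  then show ?thesis by (auto simp: form_radical_def)
qed

lemma conj_linear_involutionD:
  assumes "conj_linear_involution sc G0 G1 br \<phi>"
  shows "\<phi> (a + b) = \<phi> a + \<phi> b"
    and "\<phi> (sc k a) = sc (cnj k) (\<phi> a)"
    and "a \<in> gpart G0 G1 p \<Longrightarrow> \<phi> a \<in> gpart G0 G1 p"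
    and "\<phi> (br a b) = br (\<phi> a) (\<phi> b)"
  using assms unfolding conj_linear_involution_def gpart_def by (auto split: if_splits)

lemma invariant_supersymmetric_form_conj:
  assumes C: "invariant_supersymmetric_form sc G0 G1 br C"
    and \<phi>: "conj_linear_involution sc G0 G1 br \<phi>"
  shows "invariant_supersymmetric_form sc G0 G1 br (\<lambda>a b. cnj (C (\<phi> a) (\<phi> b)))"
proof -
  note bil = invariant_supersymmetric_formD(1)[OF C]
  have cnj_psign: "cnj (psign p q) = psign p q" for p q
    by (simp add: psign_def)
  show ?thesis unfolding invariant_supersymmetric_form_def
  proof (intro conjI allI impI)
    fix p q a b assume "a \<in> gpart G0 G1 p" "b \<in> gpart G0 G1 q"
    then have \<phi>ab: "\<phi> a \<in> gpart G0 G1 p" "\<phi> b \<in> gpart G0 G1 q"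
      by (simp_all add: conj_linear_involutionD(3)[OF \<phi>])
    show "cnj (C (\<phi> a) (\<phi> b)) = psign p q * cnj (C (\<phi> b) (\<phi> a))"
      by (simp add: invariant_supersymmetric_formD(3)[OF C \<phi>ab] cnj_psign)
  next
    fix a b assume "a \<in> G0" "b \<in> G1"
    then show "cnj (C (\<phi> a) (\<phi> b)) = 0"
      using invariant_supersymmetric_formD(2)[OF C] conj_linear_involutionD(3)[OF \<phi>, of _ False]
        conj_linear_involutionD(3)[OF \<phi>, of _ True]
      by (simp add: gpart_def)
  qed (simp_all add: bilinear_formD[OF bil] conj_linear_involutionD(1,2,4)[OF \<phi>]
      invariant_supersymmetric_formD(4)[OF C])
qed

theorem lemma3p1:
  fixes sc :: "complex \<Rightarrow> 'g::ab_group_add \<Rightarrow> 'g"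
    and G0 G1 :: "'g set"
    and br :: "'g \<Rightarrow> 'g \<Rightarrow> 'g"
    and B :: "'g \<Rightarrow> 'g \<Rightarrow> complex"
    and \<phi> :: "'g \<Rightarrow> 'g"
    and x :: 'g
  assumes "simple_lie_superalgebra sc G0 G1 br"
    and "\<exists>Basis. finite_dimensional_vector_space sc Basis"
    and "invariant_supersymmetric_form sc G0 G1 br B"
    and "conj_linear_involution sc G0 G1 br \<phi>"
    and "B x x \<in> \<real>" and "B x x \<noteq> 0"
    and "\<phi> x = x"
  shows "\<forall>a b. cnj (B (\<phi> a) (\<phi> b)) = B a b"
proof -
  note simple = assms(1) and B = assms(3)
  obtain Basis where fin_dim: "finite_dimensional_vector_space sc Basis"
    using assms(2) by blast
  define B' where "B' a b = cnj (B (\<phi> a) (\<phi> b))" for a b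
  have B': "invariant_supersymmetric_form sc G0 G1 br B'"
    unfolding B'_def by (rule invariant_supersymmetric_form_conj[OF B assms(4)])
  have "form_radical B = {0}"
    using simple_invariant_form_eq_0[OF simple B] \<open>B x x \<noteq> 0\<close> by blast
  moreover have "x \<noteq> 0"
    using bilinear_form_zero[OF invariant_supersymmetric_formD(1)[OF B]] \<open>B x x \<noteq> 0\<close> by auto
  ultimately obtain e where "form_radical (\<lambda>a b. B' a b - e * B a b) \<noteq> {0}"
    using bilinear_form_pencil_degenerate[OF fin_dim invariant_supersymmetric_formD(1)[OF B']
        invariant_supersymmetric_formD(1)[OF B]] by blast
  then have proportional: "B' a b = e * B a b" for a b
    using simple_invariant_form_eq_0[OF simple invariant_supersymmetric_form_diff_scaled[OF B' B]]
    by simp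
  have "B' x x = B x x"
    using assms(5,7) by (simp add: B'_def Reals_cnj_iff)
  then have "e = 1"
    using proportional[of x x] \<open>B x x \<noteq> 0\<close> by simp
  then show ?thesis
    using proportional by (simp add: B'_def)
qed

end
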